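(* With the relaxed barrier functions $\hat B_x$, $\hat B_u$, $\hat B_f$ and the numbers $\bar\beta_x(\delta)$, $\bar\beta_u(\delta)$, $\bar\beta_f(\delta)$ defined in the context, it holds that $\{x\in\mathbb{R}^n:\hat B_x(x)\le\bar\beta_x(\delta)\}\subseteq\mathcal{X}$, $\{u\in\mathbb{R}^m:\hat B_u(u)\le\bar\beta_u(\delta)\}\subseteq\mathcal{U}$, and $\{x\in\mathbb{R}^n:\hat B_f(x)\le\bar\beta_f(\delta)\}\subseteq\mathcal{X}_f$.
   Context: Constraint sets are (compact) polytopes $\mathcal{X}=\{x\in\mathbb{R}^n: C_xx\le d_x\}$, $\mathcal{U}=\{u\in\mathbb{R}^m: C_uu\le d_u\}$ with $C_x\in\mathbb{R}^{q_x\times n}$, $C_u\in\mathbb{R}^{q_u\times m}$, and $d_x,d_u$ with strictly positive entries; $C^i$ is the $i$-th row, $d^i$ the $i$-th entry. Relaxed logarithmic barrier: fix $\delta\in(0,1]$. The relaxing function $\beta(\cdot;\delta):(-\infty,\delta]\to\mathbb{R}$ is either $\beta_k(z;\delta)=\frac{k-1}{k}\big[\big(\frac{z-k\delta}{(k-1)\delta}\big)^k-1\big]-\ln\delta$ for some even integer $k\ge2$, or $\beta_e(z;\delta)=\exp(1-z/\delta)-1-\ln\delta$. Define $\hat B(z)=-\ln z$ for $z>\delta$ and $\hat B(z)=\beta(z;\delta)$ for $z\le\delta$. Relaxed recentered barriers: with $z_x^i(x)=-C_x^ix+d_x^i$, $\hat B_x(x)=\sum_{i=1}^{q_x}\hat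 B_{x,i}(x)$ where either (gradient recentering) $\hat B_{x,i}(x)=\hat B(z_x^i(x))+\ln d_x^i-C_x^ix/d_x^i$ for all $i$, or (weight recentering) $\hat B_{x,i}(x)=(1+w_x^i)(\hat B(z_x^i(x))+\ln d_x^i)$ with a vector $w_x\ge0$ satisfying $\sum_i(1+w_x^i)(C_x^i)^\top/d_x^i=0$; $\hat B_u$ is defined analogously from $C_u,d_u$ (and a weight vector $w_u$). $\delta$ is such that $\hat B_x(0)=\hat B_u(0)=0$ and $\nabla\hat B_x(0)=0$, $\nabla\hat B_u(0)=0$. Terminal set: $\mathcal{X}_f=\{x\in\mathbb{R}^n:\varphi(x)\le1\}$ where $\varphi:\mathbb{R}^n\to\mathbb{R}_{\ge0}$ is continuously differentiable, convex and positive definite, and $\varphi(A_Kx)\le\varphi(x)$ for all $x\in\mathcal{X}_f$, with $A_K=A+BK$ for a given gain $K$. The relaxed terminal barrier is $\hat B_f(x)=\hat B(1-\varphi(x))$, i.e. $-\ln(1-\varphi(x))$ if $1-\varphi(x)>\delta$ and $\beta(1-\varphi(x);\delta)$ otherwise. Define $\bar\beta_f(\delta)=\beta(0;\delta)$, $\bar\beta_x(\delta)=\min\{\hat B_x(x): x\in\mathbb{R}^n,\ C_x^ix=d_x^i$ for some $i\in\{1,\dots,q_x\}\}$ and $\bar\beta_u(\delta)=\min\{\hat B_u(u): C_u^ju=d_u^j$ for some $j\in\{1,\dots,q_u\}\}$. *)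

theory Defs
  imports "HOL-Analysis.Analysis"
begin

definition beta_k :: "nat \<Rightarrow> real \<Rightarrow> real \<Rightarrow> real" where
  "beta_k k \<delta> z = (real k - 1) / real k * (((z - real k * \<delta>) / ((real k - 1) * \<delta>)) ^ k - 1) - ln \<delta>"

definition beta_e :: "real \<Rightarrow> real \<Rightarrow> real" where
  "beta_e \<delta> z = exp (1 - z / \<delta>) - 1 - ln \<delta>"

definition relaxing_fn :: "(real \<Rightarrow> real) \<Rightarrow> real \<Rightarrow> bool" where
  "relaxing_fn \<beta> \<delta> \<longleftrightarrow> (\<exists>k. even k \<and> k \<ge> 2 \<and> \<beta> = beta_k k \<delta>) \<or> \<beta> = beta_e \<delta>"

definition hatB :: "(real \<Rightarrow> real) \<Rightarrow> real \<Rightarrow> real \<Rightarrow> real" where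
  "hatB \<beta> \<delta> z = (if z > \<delta> then - ln z else \<beta> z)"

definition polytope :: "real^'n^'q \<Rightarrow> real^'q \<Rightarrow> (real^'n) set" where
  "polytope C d = {x. \<forall>i. C $ i \<bullet> x \<le> d $ i}"

definition grad_recentered ::
  "(real \<Rightarrow> real) \<Rightarrow> real \<Rightarrow> real^'n^'q::finite \<Rightarrow> real^'q \<Rightarrow> real^'n \<Rightarrow> real" where
  "grad_recentered \<beta> \<delta> C d x =
     (\<Sum>i\<in>UNIV. hatB \<beta> \<delta> (d $ i - C $ i \<bullet> x) + ln (d $ i) - (C $ i \<bullet> x) / d $ i)"

definition weight_recentered ::
  "(real \<Rightarrow> real) \<Rightarrow> real \<Rightarrow> real^'n^'q::finite \<Rightarrow> real^'q \<Rightarrow> real^'q \<Rightarrow> real^'n \<Rightarrow> real" where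
  "weight_recentered \<beta> \<delta> C d w x =
     (\<Sum>i\<in>UNIV. (1 + w $ i) * (hatB \<beta> \<delta> (d $ i - C $ i \<bullet> x) + ln (d $ i)))"

definition admissible_weight :: "real^'n^'q::finite \<Rightarrow> real^'q \<Rightarrow> real^'q \<Rightarrow> bool" where
  "admissible_weight C d w \<longleftrightarrow>
     (\<forall>i. w $ i \<ge> 0) \<and> (\<Sum>i\<in>UNIV. ((1 + w $ i) / d $ i) *\<^sub>R (C $ i)) = 0"

definition relaxed_recentered_barrier ::
  "(real \<Rightarrow> real) \<Rightarrow> real \<Rightarrow> real^'n^'q::finite \<Rightarrow> real^'q \<Rightarrow> (real^'n \<Rightarrow> real) \<Rightarrow> bool" where
  "relaxed_recentered_barrier \<beta> \<delta> C d Bf \<longleftrightarrow>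
     Bf = grad_recentered \<beta> \<delta> C d \<or>
     (\<exists>w. admissible_weight C d w \<and> Bf = weight_recentered \<beta> \<delta> C d w)"

definition bar_beta :: "real^'n^'q \<Rightarrow> real^'q \<Rightarrow> (real^'n \<Rightarrow> real) \<Rightarrow> real" where
  "bar_beta C d Bf = (INF x\<in>{x. \<exists>i. C $ i \<bullet> x = d $ i}. Bf x)"

end

theory Submission
  imports Defs
begin

text \<open>
  Both branches of the relaxed barrier are smooth and glue at \<open>\<delta>\<close> to a differentiable
  function whose derivative is strictly increasing, so \<open>hatB\<close> is strictly convex and strictly decreasing on \<open>(-\<infinity>, \<delta>]\<close>.
  The last property gives the terminal-set claim, since \<open>hatB z > hatB 0 = \<beta> 0\<close> for \<open>z < 0\<close>.
  A recentered barrier is a positive combination of \<open>hatB\<close> composed with the affine maps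
  \<open>x \<mapsto> d\<^sub>i - C\<^sub>i x\<close> plus a linear function, so along every ray \<open>t \<mapsto> B (t x)\<close> it has
  nondecreasing slope, which vanishes at \<open>t = 0\<close> because \<open>0\<close> is a critical point of \<open>B\<close>.
  Hence \<open>B\<close> increases along rays, strictly unless \<open>C x = 0\<close>. If \<open>x\<close> violates a constraint
  \<open>C\<^sub>j x \<le> d\<^sub>j\<close>, the ray through \<open>x\<close> meets the hyperplane \<open>C\<^sub>j y = d\<^sub>j\<close> at some \<open>t x\<close>
  with \<open>0 < t < 1\<close>, whence \<open>bar_beta \<le> B (t x) < B x\<close>.
\<close>

lemma has_real_derivative_beta_k:
  fixes \<delta> :: real and k :: nat
  assumes "0 < \<delta>" and "k \<ge> 2"
  shows "(beta_k k \<delta> has_real_derivative ((z - real k * \<delta>) / ((real k - 1) * \<delta>)) ^ (k - 1) / \<delta>) (at z)"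
proof -
  have scale: "(real k - 1) / real k * (real k * (w / ((real k - 1) * \<delta>))) = w / \<delta>" for w
    using assms by (simp add: field_simps)
  show ?thesis
    unfolding beta_k_def[abs_def]
    by (rule DERIV_cong) (use assms scale in \<open>auto intro!: derivative_eq_intros\<close>)
qed

lemma beta_k_at_delta:
  fixes \<delta> :: real and k :: nat
  assumes "0 < \<delta>" and "even k" and "k \<ge> 2"
  shows "beta_k k \<delta> \<delta> = - ln \<delta>"
    and "((\<delta> - real k * \<delta>) / ((real k - 1) * \<delta>)) ^ (k - 1) / \<delta> = - 1 / \<delta>"
proof -
  have minus_one: "(\<delta> - real k * \<delta>) / ((real k - 1) * \<delta>) = - 1"
    using assms by (simp add: field_simps)
  show "beta_k k \<delta> \<delta> = - ln \<delta>"
    unfolding beta_k_def minus_one using assms by simp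
  show "((\<delta> - real k * \<delta>) / ((real k - 1) * \<delta>)) ^ (k - 1) / \<delta> = - 1 / \<delta>"
    unfolding minus_one using assms by simp
qed

lemma strict_mono_on_beta_k_derivative:
  fixes \<delta> :: real and k :: nat
  assumes "0 < \<delta>" and "even k" and "k \<ge> 2"
  shows "strict_mono_on {..\<delta>} (\<lambda>z. ((z - real k * \<delta>) / ((real k - 1) * \<delta>)) ^ (k - 1) / \<delta>)"
proof (rule strict_mono_onI)
  fix y z assume "y \<in> {..\<delta>}" "z \<in> {..\<delta>}" "y < z"
  define u where "u z = (z - real k * \<delta>) / ((real k - 1) * \<delta>)" for z
  have k1: "real k - 1 > 0" and odd: "odd (k - 1)"
    using assms by auto
  have "u y < u z"
    unfolding u_def using \<open>y < z\<close> k1 assms by (simp add: divide_strict_right_mono)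
  moreover have "u z \<le> - 1"
    unfolding u_def using \<open>z \<in> {..\<delta>}\<close> k1 assms by (simp add: field_simps)
  ultimately have "(- u z) ^ (k - 1) < (- u y) ^ (k - 1)"
    using odd by (intro power_strict_mono) (auto simp: odd_pos)
  hence "u y ^ (k - 1) < u z ^ (k - 1)"
    using odd by simp
  thus "u y ^ (k - 1) / \<delta> < u z ^ (k - 1) / \<delta>"
    using assms by (simp add: divide_strict_right_mono)
qed

lemma has_real_derivative_beta_e:
  "0 < \<delta> \<Longrightarrow> (beta_e \<delta> has_real_derivative - exp (1 - z / \<delta>) / \<delta>) (at z)"
  unfolding beta_e_def[abs_def] by (auto intro!: derivative_eq_intros)

lemma strict_mono_beta_e_derivative:
  fixes \<delta> :: real
  assumes "0 < \<delta>"
  shows "strict_mono (\<lambda>z. - exp (1 - z / \<delta>) / \<delta>)"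
proof (rule strict_monoI)
  fix y z :: real assume "y < z"
  hence "exp (1 - z / \<delta>) < exp (1 - y / \<delta>)"
    using assms by (simp add: divide_strict_right_mono)
  thus "- exp (1 - y / \<delta>) / \<delta> < - exp (1 - z / \<delta>) / \<delta>"
    using assms by (simp add: divide_strict_right_mono)
qed

lemma relaxing_fn_derivative:
  assumes "0 < \<delta>" and "relaxing_fn \<beta> \<delta>"
  obtains \<beta>' where "\<And>z. (\<beta> has_real_derivative \<beta>' z) (at z)"
    and "\<beta> \<delta> = - ln \<delta>" and "\<beta>' \<delta> = - 1 / \<delta>" and "strict_mono_on {..\<delta>} \<beta>'"
  using assms(2) unfolding relaxing_fn_def
proof (elim disjE exE conjE)
  fix k assume k: "even k" "k \<ge> 2" "\<beta> = beta_k k \<delta>"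
  show thesis
    by (rule that[of "\<lambda>z. ((z - real k * \<delta>) / ((real k - 1) * \<delta>)) ^ (k - 1) / \<delta>", unfolded k(3)])
       (use has_real_derivative_beta_k[OF assms(1) k(2)] beta_k_at_delta[OF assms(1) k(1,2)]
          strict_mono_on_beta_k_derivative[OF assms(1) k(1,2)] in auto)
next
  assume e: "\<beta> = beta_e \<delta>"
  have "strict_mono_on {..\<delta>} (\<lambda>z. - exp (1 - z / \<delta>) / \<delta>)"
    using strict_mono_beta_e_derivative[OF assms(1)] by (simp add: strict_mono_on_def strict_mono_def)
  thus thesis
    by (rule that[of "\<lambda>z. - exp (1 - z / \<delta>) / \<delta>", unfolded e, rotated -1])
       (use has_real_derivative_beta_e[OF assms(1)] assms(1) in \<open>auto simp: beta_e_def\<close>)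
qed

lemma has_real_derivative_hatB:
  fixes \<delta> :: real and \<beta> \<beta>' :: "real \<Rightarrow> real"
  assumes "0 < \<delta>" and \<beta>': "\<And>z. (\<beta> has_real_derivative \<beta>' z) (at z)"
    and "\<beta> \<delta> = - ln \<delta>" and "\<beta>' \<delta> = - 1 / \<delta>"
  shows "(hatB \<beta> \<delta> has_real_derivative (if \<delta> < z then - 1 / z else \<beta>' z)) (at z)"
proof -
  have log: "((\<lambda>z. - ln z) has_real_derivative - 1 / z) (at z)" if "0 < z" for z :: real
    using that by (auto intro!: derivative_eq_intros simp: field_simps)
  consider "\<delta> < z" | "z < \<delta>" | "z = \<delta>" by linarith
  thus ?thesis
  proof cases
    case 1
    have "(hatB \<beta> \<delta> has_real_derivative - 1 / z) (at z)"
      by (rule has_field_derivative_transform_within_open[OF log, where S = "{\<delta><..}"])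
         (use 1 assms(1) in \<open>auto simp: hatB_def\<close>)
    thus ?thesis using 1 by simp
  next
    case 2
    have "(hatB \<beta> \<delta> has_real_derivative \<beta>' z) (at z)"
      by (rule has_field_derivative_transform_within_open[OF \<beta>', where S = "{..<\<delta>}"])
         (use 2 in \<open>auto simp: hatB_def\<close>)
    thus ?thesis using 2 by simp
  next
    case 3
    have left: "(hatB \<beta> \<delta> has_real_derivative - 1 / \<delta>) (at \<delta> within {..\<delta>})"
    proof (rule has_field_derivative_transform_within[where d = 1])
      show "(\<beta> has_real_derivative - 1 / \<delta>) (at \<delta> within {..\<delta>})"
        using \<beta>'[of \<delta>] assms(4) has_field_derivative_at_within by metis
    qed (auto simp: hatB_def)
    have right: "(hatB \<beta> \<delta> has_real_derivative - 1 / \<delta>) (at \<delta> within {\<delta>..})"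
      by (rule has_field_derivative_transform_within[OF has_field_derivative_at_within[OF log], where d = 1])
         (use assms in \<open>auto simp: hatB_def\<close>)
    have "{..\<delta>} \<union> {\<delta>..} = (UNIV :: real set)" by auto
    with left right have "(hatB \<beta> \<delta> has_real_derivative - 1 / \<delta>) (at \<delta>)"
      unfolding has_field_derivative_iff by (metis Lim_within_Un)
    thus ?thesis using 3 assms by simp
  qed
qed

lemma strict_mono_hatB_derivative:
  fixes \<delta> :: real and \<beta>' :: "real \<Rightarrow> real"
  assumes "0 < \<delta>" and "\<beta>' \<delta> = - 1 / \<delta>" and mono: "strict_mono_on {..\<delta>} \<beta>'"
  shows "strict_mono (\<lambda>z. if \<delta> < z then - 1 / z else \<beta>' z)"
proof (rule strict_monoI)
  fix y z :: real assume "y < z"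
  have "\<beta>' y \<le> - 1 / \<delta>" if "y \<le> \<delta>"
    using strict_mono_onD[OF mono, of y \<delta>] that assms(2) by (cases "y = \<delta>") auto
  moreover have "- 1 / \<delta> < - 1 / z" if "\<delta> < z"
    using that assms(1) by (simp add: frac_less2)
  moreover have "- 1 / y < - 1 / z" if "\<delta> < y"
    using that \<open>y < z\<close> assms(1) by (simp add: frac_less2)
  ultimately show "(if \<delta> < y then - 1 / y else \<beta>' y) < (if \<delta> < z then - 1 / z else \<beta>' z)"
    using strict_mono_onD[OF mono, of y z] \<open>y < z\<close> by auto
qed

lemma hatB_strictly_convex:
  assumes "0 < \<delta>" and "relaxing_fn \<beta> \<delta>"
  obtains D where "\<And>z. (hatB \<beta> \<delta> has_real_derivative D z) (at z)"
    and "strict_mono D" and "D \<delta> < 0"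
proof -
  obtain \<beta>' where "\<And>z. (\<beta> has_real_derivative \<beta>' z) (at z)"
    and "\<beta> \<delta> = - ln \<delta>" and "\<beta>' \<delta> = - 1 / \<delta>" and "strict_mono_on {..\<delta>} \<beta>'"
    using relaxing_fn_derivative[OF assms] by blast
  with assms(1) show thesis
    using that[of "\<lambda>z. if \<delta> < z then - 1 / z else \<beta>' z"]
      has_real_derivative_hatB strict_mono_hatB_derivative by simp
qed

lemma hatB_negative_gt_beta_zero:
  assumes "0 < \<delta>" and "relaxing_fn \<beta> \<delta>" and "z < 0"
  shows "\<beta> 0 < hatB \<beta> \<delta> z"
proof -
  obtain D where D: "\<And>z. (hatB \<beta> \<delta> has_real_derivative D z) (at z)"
    and "strict_mono D" and "D \<delta> < 0"
    using hatB_strictly_convex[OF assms(1,2)] by blast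
  have "hatB \<beta> \<delta> 0 < hatB \<beta> \<delta> z"
  proof (rule DERIV_neg_imp_decreasing[OF \<open>z < 0\<close>])
    fix y :: real assume "y \<le> 0"
    hence "D y < D \<delta>"
      using assms(1) by (intro strict_monoD[OF \<open>strict_mono D\<close>]) simp
    hence "D y < 0"
      using \<open>D \<delta> < 0\<close> by simp
    thus "\<exists>D'. (hatB \<beta> \<delta> has_real_derivative D') (at y) \<and> D' < 0"
      using D by blast
  qed
  thus ?thesis
    using assms(1) by (simp add: hatB_def)
qed

definition barrier_sum ::
  "(real \<Rightarrow> real) \<Rightarrow> real^'n^'q::finite \<Rightarrow> real^'q \<Rightarrow> ('q \<Rightarrow> real) \<Rightarrow> ('q \<Rightarrow> real) \<Rightarrow> ('q \<Rightarrow> real)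
    \<Rightarrow> real^'n \<Rightarrow> real" where
  "barrier_sum h C d c e g x = (\<Sum>i\<in>UNIV. c i * h (d $ i - C $ i \<bullet> x) + e i + g i * (C $ i \<bullet> x))"

lemma relaxed_recentered_barrier_is_barrier_sum:
  assumes "relaxed_recentered_barrier \<beta> \<delta> C d Bf"
  obtains c e g where "\<And>i. 0 < c i" and "Bf = barrier_sum (hatB \<beta> \<delta>) C d c e g"
  using assms unfolding relaxed_recentered_barrier_def
proof (elim disjE exE conjE)
  assume "Bf = grad_recentered \<beta> \<delta> C d"
  thus thesis
    using that[of "\<lambda>_. 1" "\<lambda>i. ln (d $ i)" "\<lambda>i. - 1 / d $ i"]
    by (simp add: fun_eq_iff grad_recentered_def barrier_sum_def)
next
  fix w assume "admissible_weight C d w" "Bf = weight_recentered \<beta> \<delta> C d w"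
  thus thesis
    using that[of "\<lambda>i. 1 + w $ i" "\<lambda>i. (1 + w $ i) * ln (d $ i)" "\<lambda>_. 0"]
    by (auto simp: fun_eq_iff admissible_weight_def weight_recentered_def barrier_sum_def
        algebra_simps add_pos_nonneg)
qed

definition barrier_sum_ray_slope ::
  "(real \<Rightarrow> real) \<Rightarrow> real^'n^'q::finite \<Rightarrow> real^'q \<Rightarrow> ('q \<Rightarrow> real) \<Rightarrow> ('q \<Rightarrow> real)
    \<Rightarrow> real^'n \<Rightarrow> real \<Rightarrow> real" where
  "barrier_sum_ray_slope D C d c g x t =
     (\<Sum>i\<in>UNIV. c i * (D (d $ i - t * (C $ i \<bullet> x)) * - (C $ i \<bullet> x)) + g i * (C $ i \<bullet> x))"

lemma has_real_derivative_barrier_sum_ray: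
  assumes "\<And>z. (h has_real_derivative D z) (at z)"
  shows "((\<lambda>t. barrier_sum h C d c e g (t *\<^sub>R x)) has_real_derivative
           barrier_sum_ray_slope D C d c g x t) (at t)"
proof -
  have "((\<lambda>t. \<Sum>i\<in>UNIV. c i * h (d $ i - t * (C $ i \<bullet> x)) + e i + g i * (t * (C $ i \<bullet> x)))
         has_real_derivative barrier_sum_ray_slope D C d c g x t) (at t)"
    unfolding barrier_sum_ray_slope_def
    by (rule DERIV_sum) (auto intro!: derivative_eq_intros DERIV_chain2[OF assms])
  thus ?thesis
    by (simp add: barrier_sum_def inner_scaleR_right mult.assoc)
qed

lemma strict_mono_slope_along_line:
  fixes D :: "real \<Rightarrow> real"
  assumes "strict_mono D" and "a \<noteq> 0"
  shows "strict_mono (\<lambda>t. D (b - t * a) * - a)"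
proof (rule strict_monoI)
  fix s t :: real assume "s < t"
  show "D (b - s * a) * - a < D (b - t * a) * - a"
  proof (cases "a > 0")
    case True
    hence "D (b - t * a) < D (b - s * a)"
      using \<open>s < t\<close> by (intro strict_monoD[OF assms(1)]) simp
    thus ?thesis using True by (simp add: mult_strict_right_mono_neg)
  next
    case False
    hence "a < 0" using assms(2) by simp
    hence "D (b - s * a) < D (b - t * a)"
      using \<open>s < t\<close> by (intro strict_monoD[OF assms(1)]) (simp add: mult_strict_right_mono_neg)
    thus ?thesis using \<open>a < 0\<close> by (simp add: mult_strict_right_mono)
  qed
qed

lemma mono_slope_along_line:
  fixes D :: "real \<Rightarrow> real"
  assumes "strict_mono D"
  shows "mono (\<lambda>t. D (b - t * a) * - a)"
  using strict_mono_mono[OF strict_mono_slope_along_line[OF assms]] by (cases "a = 0") (auto intro: monoI)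

lemma mono_barrier_sum_ray_slope:
  assumes "strict_mono D" and "\<And>i. 0 < c i"
  shows "mono (barrier_sum_ray_slope D C d c g x)"
  unfolding barrier_sum_ray_slope_def
  by (intro monoI sum_mono add_right_mono mult_left_mono monoD[OF mono_slope_along_line[OF assms(1)]])
     (auto intro: less_imp_le assms(2))

lemma strict_mono_barrier_sum_ray_slope:
  assumes "strict_mono D" and "\<And>i. 0 < c i" and "C $ j \<bullet> x \<noteq> 0"
  shows "strict_mono (barrier_sum_ray_slope D C d c g x)"
proof (rule strict_monoI)
  fix s t :: real assume "s < t"
  let ?term = "\<lambda>i t. c i * (D (d $ i - t * (C $ i \<bullet> x)) * - (C $ i \<bullet> x)) + g i * (C $ i \<bullet> x)"
  have "?term i s \<le> ?term i t" for i
    using monoD[OF mono_slope_along_line[OF assms(1)]] \<open>s < t\<close> assms(2)[of i]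
    by (intro add_right_mono mult_left_mono) auto
  moreover have "?term j s < ?term j t"
    using strict_monoD[OF strict_mono_slope_along_line[OF assms(1,3)] \<open>s < t\<close>] assms(2)[of j]
    by (intro add_strict_right_mono mult_strict_left_mono) auto
  ultimately show "barrier_sum_ray_slope D C d c g x s < barrier_sum_ray_slope D C d c g x t"
    unfolding barrier_sum_ray_slope_def by (intro sum_strict_mono_ex1) auto
qed

lemma ray_derivative_at_critical_point:
  fixes f :: "'a::real_normed_vector \<Rightarrow> real"
  assumes "(f has_derivative (\<lambda>h. 0)) (at 0)"
    and "((\<lambda>t. f (t *\<^sub>R x)) has_real_derivative f') (at 0)"
  shows "f' = 0"
proof -
  have "((\<lambda>t. f (t *\<^sub>R x)) has_derivative (\<lambda>h. 0)) (at 0)"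
    using has_derivative_compose[OF bounded_linear_scaleR_left[THEN bounded_linear_imp_has_derivative]
        , of f "\<lambda>h. 0" 0 x] assms(1) by simp
  hence "(\<lambda>h. f' * h) = (\<lambda>h. 0)"
    using has_derivative_unique assms(2) unfolding has_field_derivative_def by blast
  from fun_cong[OF this, of 1] show ?thesis by simp
qed

lemma nondecreasing_from_critical_point:
  fixes f f' :: "real \<Rightarrow> real"
  assumes "\<And>t. (f has_real_derivative f' t) (at t)" and "f' 0 = 0" and "mono f'"
    and "0 \<le> s" and "s \<le> t"
  shows "f s \<le> f t"
proof (rule DERIV_nonneg_imp_nondecreasing[OF \<open>s \<le> t\<close>])
  fix y assume "s \<le> y"
  hence "f' 0 \<le> f' y"
    using \<open>0 \<le> s\<close> by (intro monoD[OF \<open>mono f'\<close>]) simp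
  thus "\<exists>D. (f has_real_derivative D) (at y) \<and> 0 \<le> D"
    using assms(1,2) by auto
qed

lemma increasing_from_critical_point:
  fixes f f' :: "real \<Rightarrow> real"
  assumes "\<And>t. (f has_real_derivative f' t) (at t)" and "f' 0 = 0" and "strict_mono f'"
    and "0 \<le> s" and "s < t"
  shows "f s < f t"
proof (rule DERIV_pos_imp_increasing_open[OF \<open>s < t\<close>])
  fix y assume "s < y"
  hence "f' 0 < f' y"
    using \<open>0 \<le> s\<close> by (intro strict_monoD[OF \<open>strict_mono f'\<close>]) simp
  thus "\<exists>D. (f has_real_derivative D) (at y) \<and> 0 < D"
    using assms(1,2) by auto
next
  show "continuous_on {s..t} f"
    using assms(1) by (meson DERIV_isCont continuous_at_imp_continuous_on)
qed

lemma outside_polytope_meets_hyperplane: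
  assumes "\<And>i. 0 < d $ i" and "x \<notin> polytope C d"
  obtains j t where "0 < t" "t < 1" "C $ j \<bullet> (t *\<^sub>R x) = d $ j" "C $ j \<bullet> x \<noteq> 0"
proof -
  obtain j where j: "d $ j < C $ j \<bullet> x"
    using assms(2) unfolding polytope_def by (auto simp: not_le)
  with assms(1)[of j] show thesis
    by (intro that[of "d $ j / (C $ j \<bullet> x)" j]) (auto simp: divide_simps)
qed

lemma barrier_sum_sublevel_subset_polytope:
  assumes "\<And>i. 0 < d $ i" and "\<And>i. 0 < c i"
    and "\<And>z. (h has_real_derivative D z) (at z)" and "strict_mono D"
    and B: "B = barrier_sum h C d c e g" and "B 0 = 0" and "(B has_derivative (\<lambda>h. 0)) (at 0)"
  shows "{x. B x \<le> bar_beta C d B} \<subseteq> polytope C d"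
proof
  let ?slope = "barrier_sum_ray_slope D C d c g"
  have ray: "((\<lambda>t. B (t *\<^sub>R x)) has_real_derivative ?slope x t) (at t)" for x t
    unfolding B using has_real_derivative_barrier_sum_ray[OF assms(3)] .
  have slope_0: "?slope x 0 = 0" for x
    using ray_derivative_at_critical_point[OF assms(7) ray] .
  have "0 \<le> B y" for y
    using nondecreasing_from_critical_point[OF ray[of y] slope_0 mono_barrier_sum_ray_slope[OF assms(4,2)],
        of 0 1] \<open>B 0 = 0\<close> by simp
  hence bdd: "bdd_below (B ` S)" for S
    by (meson bdd_belowI2)
  fix x assume "x \<in> {x. B x \<le> bar_beta C d B}"
  show "x \<in> polytope C d"
  proof (rule ccontr)
    assume "x \<notin> polytope C d"
    then obtain j t where "0 < t" "t < 1" "C $ j \<bullet> (t *\<^sub>R x) = d $ j" "C $ j \<bullet> x \<noteq> 0"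
      using outside_polytope_meets_hyperplane[OF assms(1)] by blast
    hence "bar_beta C d B \<le> B (t *\<^sub>R x)"
      unfolding bar_beta_def by (intro cINF_lower[OF bdd]) blast
    also have "B (t *\<^sub>R x) < B (1 *\<^sub>R x)"
      using increasing_from_critical_point[OF ray[of x] slope_0
          strict_mono_barrier_sum_ray_slope[OF assms(4,2) \<open>C $ j \<bullet> x \<noteq> 0\<close>], of t 1]
        \<open>0 < t\<close> \<open>t < 1\<close>
      by simp
    finally show False
      using \<open>x \<in> {x. B x \<le> bar_beta C d B}\<close> by simp
  qed
qed

lemma relaxed_recentered_barrier_sublevel_subset_polytope:
  assumes "0 < \<delta>" and "relaxing_fn \<beta> \<delta>" and "\<forall>i. 0 < d $ i"
    and "relaxed_recentered_barrier \<beta> \<delta> C d B"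
    and "B 0 = 0" and "(B has_derivative (\<lambda>h. 0)) (at 0)"
  shows "{x. B x \<le> bar_beta C d B} \<subseteq> polytope C d"
proof -
  obtain D where D: "\<And>z. (hatB \<beta> \<delta> has_real_derivative D z) (at z)" and "strict_mono D"
    using hatB_strictly_convex[OF assms(1,2)] by blast
  obtain c e g where c: "\<And>i. 0 < c i" and B: "B = barrier_sum (hatB \<beta> \<delta>) C d c e g"
    using relaxed_recentered_barrier_is_barrier_sum[OF assms(4)] by blast
  show ?thesis
    by (rule barrier_sum_sublevel_subset_polytope[OF _ c D \<open>strict_mono D\<close> B])
       (use assms(3,5,6) in auto)
qed

theorem lemma1:
  fixes \<delta> :: real and \<beta> :: "real \<Rightarrow> real"
    and Cx :: "real^'n::finite^'qx::finite" and dx :: "real^'qx"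
    and Cu :: "real^'m::finite^'qu::finite" and du :: "real^'qu"
    and Bx :: "real^'n \<Rightarrow> real" and Bu :: "real^'m \<Rightarrow> real"
    and \<phi> :: "real^'n \<Rightarrow> real"
    and A :: "real^'n^'n" and B :: "real^'m^'n" and K :: "real^'n^'m"
  assumes "0 < \<delta>" and "\<delta> \<le> 1" and "relaxing_fn \<beta> \<delta>"
    and "\<forall>i. dx $ i > 0" and "\<forall>j. du $ j > 0"
    and "compact (polytope Cx dx)" and "compact (polytope Cu du)"
    and "relaxed_recentered_barrier \<beta> \<delta> Cx dx Bx"
    and "relaxed_recentered_barrier \<beta> \<delta> Cu du Bu"
    and "Bx 0 = 0" and "Bu 0 = 0"
    and "(Bx has_derivative (\<lambda>h. 0)) (at 0)"
    and "(Bu has_derivative (\<lambda>h. 0)) (at 0)"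
    and "\<forall>x. \<phi> x \<ge> 0" and "\<phi> 0 = 0" and "\<forall>x. x \<noteq> 0 \<longrightarrow> \<phi> x > 0"
    and "convex_on UNIV \<phi>"
    and "\<exists>g. (\<forall>x. (\<phi> has_derivative (\<lambda>h. g x \<bullet> h)) (at x)) \<and> continuous_on UNIV g"
    and "\<forall>x. \<phi> x \<le> 1 \<longrightarrow> \<phi> ((A + B ** K) *v x) \<le> \<phi> x"
  shows "{x. Bx x \<le> bar_beta Cx dx Bx} \<subseteq> polytope Cx dx
       \<and> {u. Bu u \<le> bar_beta Cu du Bu} \<subseteq> polytope Cu du
       \<and> {x. hatB \<beta> \<delta> (1 - \<phi> x) \<le> \<beta> 0} \<subseteq> {x. \<phi> x \<le> 1}"
proof (intro conjI)
  show "{x. Bx x \<le> bar_beta Cx dx Bx} \<subseteq> polytope Cx dx"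
    by (rule relaxed_recentered_barrier_sublevel_subset_polytope[OF assms(1,3,4,8,10,12)])
  show "{u. Bu u \<le> bar_beta Cu du Bu} \<subseteq> polytope Cu du"
    by (rule relaxed_recentered_barrier_sublevel_subset_polytope[OF assms(1,3,5,9,11,13)])
  show "{x. hatB \<beta> \<delta> (1 - \<phi> x) \<le> \<beta> 0} \<subseteq> {x. \<phi> x \<le> 1}"
  proof
    fix x assume "x \<in> {x. hatB \<beta> \<delta> (1 - \<phi> x) \<le> \<beta> 0}"
    hence "\<not> 1 - \<phi> x < 0"
      using hatB_negative_gt_beta_zero[OF assms(1,3)] by fastforce
    thus "x \<in> {x. \<phi> x \<le> 1}" by simp
  qed
qed

end
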